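(* Let $\hat G$ be a multigraph, let $f\in E(\hat G)$ be an edge with endpoints $u,v$, and let $G=\hat G\setminus f$ be the graph on the same node set with $f$ removed. Identify $\mathcal C_G$ with $\mathcal C_{\hat G}\cap\{x: x_f=0\}$. Let $\psi$ be a height function inducing a good triangulation $\mathcal T_{\hat G}$ of $\mathcal C_{\hat G}$, and let $\mathcal T_G$ be the triangulation of $\mathcal C_G$ induced by the restriction of $\psi$ to the lattice points of $\mathcal C_G$. Then for a set $S$ of lattice points of $\mathcal C_G$ the following are equivalent: (1) $S$ is a simplex of $\mathcal T_G$; (2) $S\cup\{\widetilde e_f\}$ is a simplex of $\mathcal T_{\hat G}$; (3) at least one of $S\cup\{e_f\}$, $S\cup\{\overrightarrow e_f\}$, $S\cup\{\overleftarrow e_f\}$ is a simplex of $\mathcal T_{\hat G}$.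
   Context: For a finite undirected multigraph $G=(V,E)$ (loops, parallel edges and isolated nodes allowed) with $n=|V|$, $m=|E|$, work in $\mathbb{R}^V\times\mathbb{R}^E\cong\mathbb{R}^{n+m}$ with standard basis vectors $e_u$ ($u\in V$), $e_f$ ($f\in E$). Fix for each edge $f$ an ordering $(u,v)$ of its endpoints ($u=v$ for a loop) and set $\widetilde e_f=e_u+e_v-e_f$, $\overleftarrow e_f=e_u-e_v+e_f$, $\overrightarrow e_f=-e_u+e_v+e_f$ (so for a loop $\overleftarrow e_f=\overrightarrow e_f=e_f$). The cosmological polytope $\mathcal C_G$ is the convex hull of $\{e_f,\widetilde e_f,\overleftarrow e_f,\overrightarrow e_f: f\in E\}\cup\{e_u: u\in V\}$; these are exactly its lattice points, and it is an $(n+m-1)$-dimensional polytope in the hyperplane $\sum_i x_i=1$. A good triangulation of $\mathcal C_G$ is a regular triangulation (induced by a height function $\psi$ on the lattice points of $\mathcal C_G$) whose vertex set is the set of all lattice points of $\mathcal C_G$ and which contains the standard simplex $\mathrm{conv}\{e_u,e_f: u\in V, f\in E\}$ as a maximal cell; simplices of a triangulation are identified with their vertex sets. *)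

theory Defs
  imports "HOL-Analysis.Analysis"
begin

text \<open>Ambient space: R^V x R^E, realised as real^('v + 'e) for finite types 'v, 'e.
  A multigraph is given by a node set V, an edge set E and, for every edge,
  the fixed ordered pair (u,v) of its endpoints (u = v for a loop).\<close>

definition multigraph :: "'v set \<Rightarrow> 'e set \<Rightarrow> ('e \<Rightarrow> 'v \<times> 'v) \<Rightarrow> bool" where
  "multigraph V E ends \<longleftrightarrow> finite V \<and> finite E \<and>
     (\<forall>g\<in>E. fst (ends g) \<in> V \<and> snd (ends g) \<in> V)"

definition ev :: "'v \<Rightarrow> real^('v::finite + 'e::finite)" where
  "ev u = axis (Inl u) 1"

definition ee :: "'e \<Rightarrow> real^('v::finite + 'e::finite)" where
  "ee g = axis (Inr g) 1"

definition et :: "('e \<Rightarrow> 'v \<times> 'v) \<Rightarrow> 'e \<Rightarrow> real^('v::finite + 'e::finite)" where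
  "et ends g = ev (fst (ends g)) + ev (snd (ends g)) - ee g"

definition el :: "('e \<Rightarrow> 'v \<times> 'v) \<Rightarrow> 'e \<Rightarrow> real^('v::finite + 'e::finite)" where
  "el ends g = ev (fst (ends g)) - ev (snd (ends g)) + ee g"

definition er :: "('e \<Rightarrow> 'v \<times> 'v) \<Rightarrow> 'e \<Rightarrow> real^('v::finite + 'e::finite)" where
  "er ends g = - ev (fst (ends g)) + ev (snd (ends g)) + ee g"

text \<open>The lattice points of the cosmological polytope C_G (which are exactly the
  listed generating points).  For a subset E' of edges, these points live in the same
  ambient space, with all coordinates of edges outside E' equal to zero.\<close>
definition cosmo_points :: "'v set \<Rightarrow> 'e set \<Rightarrow> ('e \<Rightarrow> 'v \<times> 'v) \<Rightarrow> (real^('v::finite + 'e::finite)) set" where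
  "cosmo_points V E ends =
     ev ` V \<union> ee ` E \<union> et ends ` E \<union> el ends ` E \<union> er ends ` E"

definition cosmo_polytope :: "'v set \<Rightarrow> 'e set \<Rightarrow> ('e \<Rightarrow> 'v \<times> 'v) \<Rightarrow> (real^('v::finite + 'e::finite)) set" where
  "cosmo_polytope V E ends = convex hull (cosmo_points V E ends)"

definition std_simplex :: "'v set \<Rightarrow> 'e set \<Rightarrow> (real^('v::finite + 'e::finite)) set" where
  "std_simplex V E = ev ` V \<union> ee ` E"

text \<open>Cells (faces) of the regular subdivision of the point configuration A induced by
  the height function psi: vertex sets of lower faces of the lifted configuration,
  i.e. the points of A where some affine function below psi on A attains psi.\<close>
definition reg_cell :: "('a::euclidean_space \<Rightarrow> real) \<Rightarrow> 'a set \<Rightarrow> 'a set \<Rightarrow> bool" where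
  "reg_cell \<psi> A C \<longleftrightarrow> C \<subseteq> A \<and>
     (\<exists>w b. (\<forall>a\<in>A. w \<bullet> a + b \<le> \<psi> a) \<and> C = {a\<in>A. w \<bullet> a + b = \<psi> a})"

definition induces_triangulation :: "('a::euclidean_space \<Rightarrow> real) \<Rightarrow> 'a set \<Rightarrow> bool" where
  "induces_triangulation \<psi> A \<longleftrightarrow> (\<forall>C. reg_cell \<psi> A C \<longrightarrow> \<not> affine_dependent C)"

definition tri_simplex :: "('a::euclidean_space \<Rightarrow> real) \<Rightarrow> 'a set \<Rightarrow> 'a set \<Rightarrow> bool" where
  "tri_simplex \<psi> A S \<longleftrightarrow> (\<exists>C. reg_cell \<psi> A C \<and> S \<subseteq> C)"

definition good_triangulation ::
  "(real^('v::finite + 'e::finite) \<Rightarrow> real) \<Rightarrow> 'v set \<Rightarrow> 'e set \<Rightarrow> ('e \<Rightarrow> 'v \<times> 'v) \<Rightarrow> bool" where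
  "good_triangulation \<psi> V E ends \<longleftrightarrow>
     induces_triangulation \<psi> (cosmo_points V E ends) \<and>
     (\<forall>a\<in>cosmo_points V E ends. reg_cell \<psi> (cosmo_points V E ends) {a}) \<and>
     reg_cell \<psi> (cosmo_points V E ends) (std_simplex V E) \<and>
     (\<forall>C. reg_cell \<psi> (cosmo_points V E ends) C \<longrightarrow> std_simplex V E \<subseteq> C \<longrightarrow> C = std_simplex V E)"

end

theory Submission
  imports Defs
begin

text \<open>Restricting an affine function below psi from the lattice points of C_G^ to those of
  C_G shows that a simplex of T_G^ inside C_G is a simplex of T_G.  Conversely, an affine function
  below psi on C_G that touches psi on S can be tilted along the coordinate x_f, which is 0 on C_G,
  1 at e_f, e_f-left, e_f-right and -1 at e_f-tilde.  Tilting until psi is touched at the point of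
  least defect psi - (w.x + b) on one side keeps the function below psi on the other side,
  provided the defects of two points on opposite sides always have a nonnegative sum.  That holds
  because p + e_f-tilde is e_u + e_v, 2 e_u or 2 e_v: on the standard simplex, which contains e_u
  and e_v, psi coincides with an affine function lying below psi everywhere.\<close>

lemma tri_simplexI:
  assumes "\<forall>a\<in>A. w \<bullet> a + b \<le> \<psi> a" and "S \<subseteq> A" and "\<forall>s\<in>S. w \<bullet> s + b = \<psi> s"
  shows "tri_simplex \<psi> A S"
  unfolding tri_simplex_def reg_cell_def
  using assms by (intro exI[of _ "{a\<in>A. w \<bullet> a + b = \<psi> a}"]) blast

lemma tri_simplexE:
  assumes "tri_simplex \<psi> A S"
  obtains w b where "\<forall>a\<in>A. w \<bullet> a + b \<le> \<psi> a" and "S \<subseteq> A" and "\<forall>s\<in>S. w \<bullet> s + b = \<psi> s"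
  using assms unfolding tri_simplex_def reg_cell_def by blast

lemma tri_simplex_restrict:
  assumes "tri_simplex \<psi> A T" and "A' \<subseteq> A" and "S \<subseteq> A'" and "S \<subseteq> T"
  shows "tri_simplex \<psi> A' S"
proof -
  obtain w b where "\<forall>a\<in>A. w \<bullet> a + b \<le> \<psi> a" and "\<forall>s\<in>T. w \<bullet> s + b = \<psi> s"
    using assms(1) by (rule tri_simplexE)
  then show ?thesis
    using assms(2-4) by (intro tri_simplexI[of A' w b]) auto
qed

lemma reg_cell_sum_bound:
  assumes "reg_cell \<psi> A C" and "q1 \<in> C" "q2 \<in> C" and "p \<in> A" "n \<in> A" and "p + n = q1 + q2"
    and "w \<bullet> q1 + b \<le> \<psi> q1" "w \<bullet> q2 + b \<le> \<psi> q2"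
  shows "w \<bullet> p + b + (w \<bullet> n + b) \<le> \<psi> p + \<psi> n"
proof -
  obtain w0 b0 where below: "\<forall>a\<in>A. w0 \<bullet> a + b0 \<le> \<psi> a"
    and cell: "C = {a\<in>A. w0 \<bullet> a + b0 = \<psi> a}"
    using assms(1) unfolding reg_cell_def by blast
  have "w \<bullet> p + w \<bullet> n = w \<bullet> q1 + w \<bullet> q2" "w0 \<bullet> p + w0 \<bullet> n = w0 \<bullet> q1 + w0 \<bullet> q2"
    by (metis assms(6) inner_add_right)+
  moreover have "w0 \<bullet> p + b0 \<le> \<psi> p" "w0 \<bullet> n + b0 \<le> \<psi> n"
    using below assms(4,5) by auto
  moreover have "w0 \<bullet> q1 + b0 = \<psi> q1" "w0 \<bullet> q2 + b0 = \<psi> q2"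
    using cell assms(2,3) by auto
  ultimately show ?thesis
    using assms(7,8) by linarith
qed

lemma tri_simplex_extend_across_hyperplane:
  assumes S: "tri_simplex \<psi> A' S"
    and A: "A = A' \<union> P \<union> N" and "finite P" "P \<noteq> {}"
    and d0: "\<forall>a\<in>A'. d \<bullet> a = 0" and dP: "\<forall>p\<in>P. d \<bullet> p = 1" and dN: "\<forall>n\<in>N. d \<bullet> n = -1"
    and sum_bound: "\<And>w b p n. \<forall>a\<in>A'. w \<bullet> a + b \<le> \<psi> a \<Longrightarrow> p \<in> P \<Longrightarrow> n \<in> N \<Longrightarrow>
                      w \<bullet> p + b + (w \<bullet> n + b) \<le> \<psi> p + \<psi> n"
  shows "\<exists>p\<in>P. tri_simplex \<psi> A (S \<union> {p})"
proof -
  obtain w b where below: "\<forall>a\<in>A'. w \<bullet> a + b \<le> \<psi> a"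
    and "S \<subseteq> A'" and onS: "\<forall>s\<in>S. w \<bullet> s + b = \<psi> s"
    using S by (rule tri_simplexE)
  define defect where "defect q = \<psi> q - (w \<bullet> q + b)" for q
  define p where "p = arg_min_on defect P"
  have "p \<in> P" and p_min: "\<And>q. q \<in> P \<Longrightarrow> defect p \<le> defect q"
    unfolding p_def using arg_min_if_finite(1)[OF assms(3,4)] arg_min_least[OF assms(3,4)] by auto
  define w' where "w' = w + defect p *\<^sub>R d"
  have w': "w' \<bullet> a = w \<bullet> a + defect p * (d \<bullet> a)" for a
    unfolding w'_def by (simp add: inner_add_left)
  have "\<forall>a\<in>A. w' \<bullet> a + b \<le> \<psi> a"
  proof
    fix a assume "a \<in> A"
    then consider "a \<in> A'" | "a \<in> P" | "a \<in> N"
      using A by blast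
    then show "w' \<bullet> a + b \<le> \<psi> a"
    proof cases
      case 1 then show ?thesis using below d0 w' by simp
    next
      case 2 then show ?thesis using p_min[of a] dP w'[of a] unfolding defect_def by auto
    next
      case 3 then show ?thesis
        using sum_bound[OF below \<open>p \<in> P\<close>] dN w'[of a] unfolding defect_def by force
    qed
  qed
  moreover have "\<forall>s\<in>S \<union> {p}. w' \<bullet> s + b = \<psi> s"
    using onS \<open>S \<subseteq> A'\<close> d0 \<open>p \<in> P\<close> dP w' unfolding defect_def by auto
  ultimately have "tri_simplex \<psi> A (S \<union> {p})"
    using \<open>S \<subseteq> A'\<close> \<open>p \<in> P\<close> A by (intro tri_simplexI) auto
  with \<open>p \<in> P\<close> show ?thesis by blast
qed

lemma cosmo_points_insert_edge:
  assumes "f \<in> E"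
  shows "cosmo_points V E ends =
    cosmo_points V (E - {f}) ends \<union> {ee f, el ends f, er ends f} \<union> {et ends f}"
proof -
  have "E = insert f (E - {f})" using assms by blast
  then show ?thesis unfolding cosmo_points_def by (auto simp: image_iff)
qed

lemma inner_ee_cosmo_points:
  assumes "f \<notin> E"
  shows "\<forall>a\<in>cosmo_points V E ends. ee f \<bullet> a = 0"
  using assms unfolding cosmo_points_def
  by (auto simp: ev_def ee_def et_def el_def er_def inner_add_right inner_diff_right inner_axis_axis)

lemma inner_ee_new_points:
  "ee f \<bullet> ee f = 1" "ee f \<bullet> el ends f = 1" "ee f \<bullet> er ends f = 1" "ee f \<bullet> et ends f = -1"
  by (auto simp: ev_def ee_def et_def el_def er_def inner_add_right inner_diff_right inner_axis_axis)

lemma sums_with_et: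
  "ee f + et ends f = ev (fst (ends f)) + ev (snd (ends f))"
  "el ends f + et ends f = ev (fst (ends f)) + ev (fst (ends f))"
  "er ends f + et ends f = ev (snd (ends f)) + ev (snd (ends f))"
  unfolding et_def el_def er_def by (simp_all add: algebra_simps)

lemma cosmo_points_edge_sum_bound:
  assumes "multigraph V E ends" and "f \<in> E"
    and std: "reg_cell \<psi> (cosmo_points V E ends) (std_simplex V E)"
    and below: "\<forall>a\<in>cosmo_points V (E - {f}) ends. w \<bullet> a + b \<le> \<psi> a"
    and p: "p \<in> {ee f, el ends f, er ends f}"
  shows "w \<bullet> p + b + (w \<bullet> et ends f + b) \<le> \<psi> p + \<psi> (et ends f)"
proof -
  have "p \<in> cosmo_points V E ends" "et ends f \<in> cosmo_points V E ends"
    using cosmo_points_insert_edge[OF assms(2)] p by auto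
  note bound = reg_cell_sum_bound[OF std _ _ this]
  have endpoints: "ev (fst (ends f)) \<in> std_simplex V E \<inter> cosmo_points V (E - {f}) ends"
    "ev (snd (ends f)) \<in> std_simplex V E \<inter> cosmo_points V (E - {f}) ends"
    using assms(1,2) unfolding multigraph_def std_simplex_def cosmo_points_def by auto
  have "w \<bullet> q + b \<le> \<psi> q" if "q \<in> std_simplex V E \<inter> cosmo_points V (E - {f}) ends" for q
    using below that by blast
  then show ?thesis
    using p endpoints sums_with_et[where f = f and ends = ends]
      bound[of "ev (fst (ends f))" "ev (snd (ends f))"]
      bound[of "ev (fst (ends f))" "ev (fst (ends f))"]
      bound[of "ev (snd (ends f))" "ev (snd (ends f))"]
    by fastforce
qed

lemma tri_simplex_insert_edge:
  assumes "multigraph V E ends" and "f \<in> E" and "good_triangulation \<psi> V E ends"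
    and S: "tri_simplex \<psi> (cosmo_points V (E - {f}) ends) S"
  shows "tri_simplex \<psi> (cosmo_points V E ends) (S \<union> {et ends f})"
    and "\<exists>p\<in>{ee f, el ends f, er ends f}. tri_simplex \<psi> (cosmo_points V E ends) (S \<union> {p})"
proof -
  define A' where "A' = cosmo_points V (E - {f}) ends"
  define P where "P = {ee f, el ends f, er ends f}"
  have A: "cosmo_points V E ends = A' \<union> P \<union> {et ends f}"
    unfolding A'_def P_def using assms(2) by (rule cosmo_points_insert_edge)
  have std: "reg_cell \<psi> (cosmo_points V E ends) (std_simplex V E)"
    using assms(3) unfolding good_triangulation_def by blast
  have sum_bound: "w \<bullet> p + b + (w \<bullet> n + b) \<le> \<psi> p + \<psi> n"
    if "\<forall>a\<in>A'. w \<bullet> a + b \<le> \<psi> a" "p \<in> P" "n \<in> {et ends f}" for w b p n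
    using that cosmo_points_edge_sum_bound[OF assms(1,2) std] unfolding A'_def P_def by blast
  have d0: "\<forall>a\<in>A'. ee f \<bullet> a = 0" "\<forall>a\<in>A'. - ee f \<bullet> a = 0"
    unfolding A'_def using inner_ee_cosmo_points[of f "E - {f}"] by auto
  have "\<forall>p\<in>P. ee f \<bullet> p = 1" "\<forall>n\<in>{et ends f}. ee f \<bullet> n = -1"
    using inner_ee_new_points unfolding P_def by auto
  then show "\<exists>p\<in>P. tri_simplex \<psi> (cosmo_points V E ends) (S \<union> {p})"
    using tri_simplex_extend_across_hyperplane[OF S[folded A'_def] A _ _ d0(1)] sum_bound
    unfolding P_def by blast
  have "cosmo_points V E ends = A' \<union> {et ends f} \<union> P" using A by blast
  moreover have "\<forall>p\<in>P. - ee f \<bullet> p = -1" "\<forall>n\<in>{et ends f}. - ee f \<bullet> n = 1"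
    using inner_ee_new_points unfolding P_def by auto
  moreover have "w \<bullet> n + b + (w \<bullet> p + b) \<le> \<psi> n + \<psi> p"
    if "\<forall>a\<in>A'. w \<bullet> a + b \<le> \<psi> a" "n \<in> {et ends f}" "p \<in> P" for w b n p
    using sum_bound[OF that(1,3,2)] by linarith
  ultimately show "tri_simplex \<psi> (cosmo_points V E ends) (S \<union> {et ends f})"
    using tri_simplex_extend_across_hyperplane[OF S[folded A'_def] _ _ _ d0(2)] by blast
qed

theorem mainTheorem1:
  fixes V :: "'v::finite set" and E :: "'e::finite set" and ends :: "'e \<Rightarrow> 'v \<times> 'v"
    and f :: 'e and \<psi> :: "real^('v + 'e) \<Rightarrow> real" and S :: "(real^('v + 'e)) set"
  assumes "multigraph V E ends"
    and "f \<in> E"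
    and "good_triangulation \<psi> V E ends"
    and "S \<subseteq> cosmo_points V (E - {f}) ends"
  shows "(tri_simplex \<psi> (cosmo_points V (E - {f}) ends) S
            \<longleftrightarrow> tri_simplex \<psi> (cosmo_points V E ends) (S \<union> {et ends f}))
       \<and> (tri_simplex \<psi> (cosmo_points V (E - {f}) ends) S
            \<longleftrightarrow> (tri_simplex \<psi> (cosmo_points V E ends) (S \<union> {ee f})
                \<or> tri_simplex \<psi> (cosmo_points V E ends) (S \<union> {er ends f})
                \<or> tri_simplex \<psi> (cosmo_points V E ends) (S \<union> {el ends f})))"
proof -
  have restrict: "tri_simplex \<psi> (cosmo_points V (E - {f}) ends) S"
    if "tri_simplex \<psi> (cosmo_points V E ends) (S \<union> {x})" for x
    using tri_simplex_restrict[OF that _ assms(4)] cosmo_points_insert_edge[OF assms(2)] by blast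
  show ?thesis
    using restrict tri_simplex_insert_edge[OF assms(1-3)] by blast
qed

end
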